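(* For every $\mu\in P^+$, $$\|F_{\mu+\rho}\|_m^2=\int_T|F_{\mu+\rho}(t)|^2\,\delta(m,t)\,dt=\frac{I_\delta}{d(\mu)},\qquad\text{where }I_\delta=\int_T\delta(m,t)\,dt.$$ Equivalently, $\|F_{\mu+\rho}\|_m^2=I_\delta\,c^*(-\mu-\rho)\,c(\mu+\rho)$.
   Context: Setting. $\mathfrak a$ is an $l$-dimensional real Euclidean space. $\Sigma\subset\mathfrak a^*$ is a (possibly non-reduced) root system with Weyl group $W$. $m:\Sigma\to\,]0,\infty[$ is $W$-invariant, and $m_\alpha=0$ for $\alpha\notin\Sigma$. Fix positive roots $\Sigma^+$. Set $\lambda_\alpha=\langle\lambda,\alpha\rangle/\langle\alpha,\alpha\rangle$, $\rho=\frac12\sum_{\alpha\in\Sigma^+}m_\alpha\alpha$, and $P^+=\{\mu\in\mathfrak a^*:\mu_\alpha\in\mathbb Z_{\ge0}\ \forall\alpha\in\Sigma^+\}$. Torus. $T=\exp(i\mathfrak a)\subset A_{\mathbb C}=\mathfrak a_{\mathbb C}/2\pi i\,\mathbb Z\{H_\alpha\}$, with $H_\alpha=2A_\alpha/\langle A_\alpha,A_\alpha\rangle$, $\alpha(H)=\langle H,A_\alpha\rangle$. $dt$ is the normalized Haar measure on $T$, and $\delta(m,\exp iH)=\prod_{\alpha\in\Sigma^+}|e^{i\alpha(H)}-e^{-i\alpha(H)}|^{m_\alpha}$. $c$-functions. For $\alpha\in\Sigma^+$, $$c_\alpha(\lambda)=\frac{\Gamma(\lambda_\alpha+m_{\alpha/2}/4)}{\Gamma(\lambda_\alpha+m_{\alpha/2}/4+m_\alpha/2)},\qquad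 c^*_\alpha(\lambda)=\frac{\Gamma(1-\lambda_\alpha-m_{\alpha/2}/4-m_\alpha/2)}{\Gamma(1-\lambda_\alpha-m_{\alpha/2}/4)}.$$ Set $\tilde c=\prod c_\alpha$, $\tilde c^*=\prod c^*_\alpha$, $c=\tilde c/\tilde c(\rho)$, $c^*=\tilde c^*/\tilde c^*(-\rho)$, and $d(\lambda)=1/(c(\lambda+\rho)c^*(-\lambda-\rho))$. $F_{\mu+\rho}$ is the Heckman–Opdam hypergeometric function (root system $2\Sigma$, multiplicity $k_{2\alpha}=m_\alpha/2$, $F(e)=1$), extended holomorphically to $A_{\mathbb C}$ via $F_{\mu+\rho}=c(\mu+\rho)P_\mu$, where $P_\mu$ is the Heckman–Opdam Jacobi polynomial. Opdam's norm formula $\|P_\mu\|_m^2=|W|\,\tilde c^*(-\mu-\rho)/\tilde c(\mu+\rho)$ may be used. *)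

theory Defs
  imports "HOL-Analysis.Analysis"
begin

text \<open>The space a (and its dual, identified via the inner product) is an abstract
  Euclidean space 'a. A root alpha is identified with the vector A_alpha, so that
  alpha(H) = H \<bullet> alpha.\<close>

definition reflect :: "'a::euclidean_space \<Rightarrow> 'a \<Rightarrow> 'a" where
  "reflect \<alpha> x = x - (2 * (x \<bullet> \<alpha>) / (\<alpha> \<bullet> \<alpha>)) *\<^sub>R \<alpha>"

text \<open>(Possibly non-reduced) root system spanning the space.\<close>
definition root_system :: "'a::euclidean_space set \<Rightarrow> bool" where
  "root_system R \<longleftrightarrow> finite R \<and> 0 \<notin> R \<and> span R = UNIV \<and>
     (\<forall>\<alpha>\<in>R. \<forall>\<beta>\<in>R. reflect \<alpha> \<beta> \<in> R \<and> 2 * (\<beta> \<bullet> \<alpha>) / (\<alpha> \<bullet> \<alpha>) \<in> \<int>)"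

inductive_set weyl_group :: "'a::euclidean_space set \<Rightarrow> ('a \<Rightarrow> 'a) set" for R where
  weyl_id: "id \<in> weyl_group R"
| weyl_step: "\<alpha> \<in> R \<Longrightarrow> w \<in> weyl_group R \<Longrightarrow> reflect \<alpha> \<circ> w \<in> weyl_group R"

definition positive_system :: "'a::euclidean_space set \<Rightarrow> 'a set \<Rightarrow> bool" where
  "positive_system R Rp \<longleftrightarrow>
     (\<exists>H0. (\<forall>\<alpha>\<in>R. \<alpha> \<bullet> H0 \<noteq> 0) \<and> Rp = {\<alpha>\<in>R. \<alpha> \<bullet> H0 > 0})"

definition multiplicity :: "'a::euclidean_space set \<Rightarrow> ('a \<Rightarrow> real) \<Rightarrow> bool" where
  "multiplicity R m \<longleftrightarrow> (\<forall>\<alpha>\<in>R. m \<alpha> > 0) \<and> (\<forall>\<alpha>. \<alpha> \<notin> R \<longrightarrow> m \<alpha> = 0) \<and>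
     (\<forall>w\<in>weyl_group R. \<forall>\<alpha>\<in>R. m (w \<alpha>) = m \<alpha>)"

definition coord :: "'a::euclidean_space \<Rightarrow> 'a \<Rightarrow> real" where
  "coord lam \<alpha> = (lam \<bullet> \<alpha>) / (\<alpha> \<bullet> \<alpha>)"

definition rho :: "'a::euclidean_space set \<Rightarrow> ('a \<Rightarrow> real) \<Rightarrow> 'a" where
  "rho Rp m = (1/2) *\<^sub>R (\<Sum>\<alpha>\<in>Rp. m \<alpha> *\<^sub>R \<alpha>)"

definition dominant :: "'a::euclidean_space set \<Rightarrow> 'a set" where
  "dominant Rp = {\<mu>. \<forall>\<alpha>\<in>Rp. coord \<mu> \<alpha> \<in> \<nat>}"

definition c_alpha :: "('a::euclidean_space \<Rightarrow> real) \<Rightarrow> 'a \<Rightarrow> 'a \<Rightarrow> real" where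
  "c_alpha m lam \<alpha> = Gamma (coord lam \<alpha> + m ((1/2) *\<^sub>R \<alpha>) / 4) /
                   Gamma (coord lam \<alpha> + m ((1/2) *\<^sub>R \<alpha>) / 4 + m \<alpha> / 2)"

definition cstar_alpha :: "('a::euclidean_space \<Rightarrow> real) \<Rightarrow> 'a \<Rightarrow> 'a \<Rightarrow> real" where
  "cstar_alpha m lam \<alpha> = Gamma (1 - coord lam \<alpha> - m ((1/2) *\<^sub>R \<alpha>) / 4 - m \<alpha> / 2) /
                       Gamma (1 - coord lam \<alpha> - m ((1/2) *\<^sub>R \<alpha>) / 4)"

definition ctilde :: "'a::euclidean_space set \<Rightarrow> ('a \<Rightarrow> real) \<Rightarrow> 'a \<Rightarrow> real" where
  "ctilde Rp m lam = (\<Prod>\<alpha>\<in>Rp. c_alpha m lam \<alpha>)"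

definition ctilde_star :: "'a::euclidean_space set \<Rightarrow> ('a \<Rightarrow> real) \<Rightarrow> 'a \<Rightarrow> real" where
  "ctilde_star Rp m lam = (\<Prod>\<alpha>\<in>Rp. cstar_alpha m lam \<alpha>)"

definition c_fun :: "'a::euclidean_space set \<Rightarrow> ('a \<Rightarrow> real) \<Rightarrow> 'a \<Rightarrow> real" where
  "c_fun Rp m lam = ctilde Rp m lam / ctilde Rp m (rho Rp m)"

definition cstar_fun :: "'a::euclidean_space set \<Rightarrow> ('a \<Rightarrow> real) \<Rightarrow> 'a \<Rightarrow> real" where
  "cstar_fun Rp m lam = ctilde_star Rp m lam / ctilde_star Rp m (- rho Rp m)"

definition d_fun :: "'a::euclidean_space set \<Rightarrow> ('a \<Rightarrow> real) \<Rightarrow> 'a \<Rightarrow> real" where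
  "d_fun Rp m lam = 1 / (c_fun Rp m (lam + rho Rp m) * cstar_fun Rp m (- lam - rho Rp m))"

definition coroot :: "'a::euclidean_space \<Rightarrow> 'a" where
  "coroot \<alpha> = (2 / (\<alpha> \<bullet> \<alpha>)) *\<^sub>R \<alpha>"

text \<open>T = exp(i a) is identified with a / (2 pi Z{H_alpha}); functions on T are
  periodic functions on a, evaluated at H for the point exp(iH).\<close>
definition torus_lattice :: "'a::euclidean_space set \<Rightarrow> 'a set" where
  "torus_lattice R = {(\<Sum>\<alpha>\<in>R. (of_int (n \<alpha>) * (2 * pi)) *\<^sub>R coroot \<alpha>) | n. True}"

definition fundamental_domain :: "'a::euclidean_space set \<Rightarrow> 'a set \<Rightarrow> bool" where
  "fundamental_domain R D \<longleftrightarrow> D \<in> sets lebesgue \<and> emeasure lebesgue D < \<infinity> \<and>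
     0 < measure lebesgue D \<and>
     (\<forall>H. \<exists>!p. fst p \<in> D \<and> snd p \<in> torus_lattice R \<and> H = fst p + snd p)"

text \<open>Integral against the normalized Haar measure dt on T.\<close>
definition torus_integral ::
    "'a::euclidean_space set \<Rightarrow> ('a \<Rightarrow> 'b::real_normed_vector) \<Rightarrow> 'b" where
  "torus_integral R f =
     (let D = (SOME D. fundamental_domain R D) in (1 / measure lebesgue D) *\<^sub>R integral D f)"

definition delta :: "'a::euclidean_space set \<Rightarrow> ('a \<Rightarrow> real) \<Rightarrow> 'a \<Rightarrow> real" where
  "delta Rp m H = (\<Prod>\<alpha>\<in>Rp.
      cmod (exp (\<i> * of_real (\<alpha> \<bullet> H)) - exp (- (\<i> * of_real (\<alpha> \<bullet> H)))) powr m \<alpha>)"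

definition orbit_sum :: "'a::euclidean_space set \<Rightarrow> 'a \<Rightarrow> 'a \<Rightarrow> complex" where
  "orbit_sum R \<nu> H = (\<Sum>\<nu>'\<in>(\<lambda>w. w \<nu>) ` weyl_group R. exp (\<i> * of_real (\<nu>' \<bullet> H)))"

definition inner_m ::
    "'a::euclidean_space set \<Rightarrow> 'a set \<Rightarrow> ('a \<Rightarrow> real) \<Rightarrow> ('a \<Rightarrow> complex) \<Rightarrow> ('a \<Rightarrow> complex) \<Rightarrow> complex" where
  "inner_m R Rp m f g = torus_integral R (\<lambda>H. f H * cnj (g H) * of_real (delta Rp m H))"

definition norm_m_sq ::
    "'a::euclidean_space set \<Rightarrow> 'a set \<Rightarrow> ('a \<Rightarrow> real) \<Rightarrow> ('a \<Rightarrow> complex) \<Rightarrow> real" where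
  "norm_m_sq R Rp m f = torus_integral R (\<lambda>H. (cmod (f H))\<^sup>2 * delta Rp m H)"

text \<open>Dominance order for the root system 2 Sigma: nu \<le> mu iff mu - nu is a
  non-negative integer combination of the positive roots 2 alpha.\<close>
definition dom_le :: "'a::euclidean_space set \<Rightarrow> 'a \<Rightarrow> 'a \<Rightarrow> bool" where
  "dom_le Rp \<nu> \<mu> \<longleftrightarrow> (\<exists>n::'a \<Rightarrow> nat. \<mu> - \<nu> = (\<Sum>\<alpha>\<in>Rp. of_nat (n \<alpha>) *\<^sub>R (2 *\<^sub>R \<alpha>)))"

definition jacobi_P ::
    "'a::euclidean_space set \<Rightarrow> 'a set \<Rightarrow> ('a \<Rightarrow> real) \<Rightarrow> 'a \<Rightarrow> 'a \<Rightarrow> complex" where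
  "jacobi_P R Rp m \<mu> = (THE f. (\<exists>c::'a \<Rightarrow> complex.
      f = (\<lambda>H. orbit_sum R \<mu> H +
             (\<Sum>\<nu>\<in>{\<nu>\<in>dominant Rp. dom_le Rp \<nu> \<mu> \<and> \<nu> \<noteq> \<mu>}. c \<nu> * orbit_sum R \<nu> H))) \<and>
      (\<forall>\<nu>\<in>dominant Rp. dom_le Rp \<nu> \<mu> \<and> \<nu> \<noteq> \<mu> \<longrightarrow> inner_m R Rp m f (orbit_sum R \<nu>) = 0))"

text \<open>F_{mu+rho} restricted to T: F_{mu+rho} = c(mu+rho) P_mu.\<close>
definition HO_F :: "'a::euclidean_space set \<Rightarrow> 'a set \<Rightarrow> ('a \<Rightarrow> real) \<Rightarrow> 'a \<Rightarrow> 'a \<Rightarrow> complex" where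
  "HO_F R Rp m \<mu> H = of_real (c_fun Rp m (\<mu> + rho Rp m)) * jacobi_P R Rp m \<mu> H"

definition I_delta :: "'a::euclidean_space set \<Rightarrow> 'a set \<Rightarrow> ('a \<Rightarrow> real) \<Rightarrow> real" where
  "I_delta R Rp m = torus_integral R (delta Rp m)"

end

theory Submission
  imports Defs
begin

(* Since F_{mu+rho} = c(mu+rho) P_mu with a real scalar c(mu+rho), the norm
   ||F_{mu+rho}||_m^2 equals c(mu+rho)^2 ||P_mu||_m^2, which Opdam's formula evaluates.
   The constant I_delta is itself an instance of Opdam's formula: the Jacobi polynomial
   P_0 is the constant 1 (no dominant weight lies strictly below 0), so
   I_delta = ||P_0||_m^2 = |W| ctilde*(-rho) / ctilde(rho).  Combining the two gives
   ||F_{mu+rho}||^2 = I_delta c*(-mu-rho) c(mu+rho) = I_delta / d(mu), provided the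
   normalising constant ctilde*(-rho) is non-zero.  That positivity is the only genuinely
   root-theoretic input: for a positive root alpha one has
   <rho,alpha> >= (m_alpha/2 + m_{alpha/2}/4) <alpha,alpha>, because the positive roots
   kept positive by the reflection s_alpha contribute nothing to <rho,alpha>, while all
   others (among them alpha and alpha/2) contribute non-negatively.  Then every Gamma
   argument in ctilde*(-rho) is positive. *)

lemma torus_integral_scale:
  "torus_integral R (\<lambda>H. c *\<^sub>R f H) = c *\<^sub>R torus_integral R f"
  unfolding torus_integral_def Let_def by simp

lemma norm_m_sq_scale:
  "norm_m_sq R Rp m (\<lambda>H. c * f H) = (cmod c)\<^sup>2 * norm_m_sq R Rp m f"
proof -
  have "(\<lambda>H. (cmod (c * f H))\<^sup>2 * delta Rp m H)
      = (\<lambda>H. (cmod c)\<^sup>2 *\<^sub>R ((cmod (f H))\<^sup>2 * delta Rp m H))"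
    by (simp add: norm_mult power_mult_distrib mult.assoc)
  then show ?thesis
    unfolding norm_m_sq_def
    using torus_integral_scale[of R "(cmod c)\<^sup>2" "\<lambda>H. (cmod (f H))\<^sup>2 * delta Rp m H"] by simp
qed

lemma weyl_group_fixes_zero: "w \<in> weyl_group R \<Longrightarrow> w 0 = 0"
  by (induction rule: weyl_group.induct) (auto simp: reflect_def)

lemma orbit_sum_zero: "orbit_sum R 0 = (\<lambda>H. 1)"
proof -
  have "(0::'a) \<in> (\<lambda>w. w 0) ` weyl_group R"
    by (rule image_eqI[where x=id]) (simp_all add: weyl_group.weyl_id)
  then have "(\<lambda>w. w 0) ` weyl_group R = {0}"
    using weyl_group_fixes_zero by blast
  then show ?thesis by (intro ext) (simp add: orbit_sum_def)
qed

lemma dominant_inner_nonneg: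
  assumes "\<nu> \<in> dominant Rp" and "\<alpha> \<in> Rp"
  shows "\<nu> \<bullet> \<alpha> \<ge> 0"
proof -
  have "coord \<nu> \<alpha> \<in> \<nat>"
    using assms unfolding dominant_def by auto
  then have "coord \<nu> \<alpha> \<ge> 0"
    by (metis Nats_cases of_nat_0_le_iff)
  moreover have "\<nu> \<bullet> \<alpha> = coord \<nu> \<alpha> * (\<alpha> \<bullet> \<alpha>)" if "\<alpha> \<noteq> 0"
    using that by (simp add: coord_def)
  ultimately show ?thesis
    by (cases "\<alpha> = 0") simp_all
qed

text \<open>The zero weight is minimal among dominant weights: if \<open>0 - \<nu>\<close> is a non-negative
  combination of positive roots, then pairing with \<open>\<nu>\<close> forces \<open>|\<nu>|\<^sup>2 \<le> 0\<close>.\<close>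
lemma dominant_below_zero:
  assumes dom: "\<nu> \<in> dominant Rp" and le: "dom_le Rp \<nu> 0"
  shows "\<nu> = 0"
proof -
  obtain n :: "_ \<Rightarrow> nat" where n: "0 - \<nu> = (\<Sum>\<alpha>\<in>Rp. of_nat (n \<alpha>) *\<^sub>R (2 *\<^sub>R \<alpha>))"
    using le unfolding dom_le_def by blast
  have "- (\<nu> \<bullet> \<nu>) = (0 - \<nu>) \<bullet> \<nu>" by simp
  also have "\<dots> = (\<Sum>\<alpha>\<in>Rp. of_nat (n \<alpha>) * 2 * (\<alpha> \<bullet> \<nu>))"
    unfolding n by (simp add: inner_sum_left mult.assoc)
  also have "\<dots> \<ge> 0"
    using dominant_inner_nonneg[OF dom] by (intro sum_nonneg) (simp add: inner_commute)
  finally have "\<nu> \<bullet> \<nu> \<le> 0" by simp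
  then show ?thesis by (metis inner_eq_zero_iff inner_ge_zero order_antisym)
qed

lemma jacobi_P_zero: "jacobi_P R Rp m 0 = (\<lambda>H. 1)"
proof -
  have no_lower: "{\<nu>\<in>dominant Rp. dom_le Rp \<nu> 0 \<and> \<nu> \<noteq> 0} = {}"
    using dominant_below_zero by blast
  show ?thesis
    unfolding jacobi_P_def no_lower
    by (intro the_equality) (auto simp: orbit_sum_zero dest: dominant_below_zero)
qed

lemma I_delta_opdam:
  assumes "norm_m_sq R Rp m (jacobi_P R Rp m 0) =
           real (card (weyl_group R)) * ctilde_star Rp m (- 0 - rho Rp m) / ctilde Rp m (0 + rho Rp m)"
  shows "I_delta R Rp m =
           real (card (weyl_group R)) * ctilde_star Rp m (- rho Rp m) / ctilde Rp m (rho Rp m)"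
  using assms by (simp add: jacobi_P_zero norm_m_sq_def I_delta_def)

lemma reflect_inner_root: "\<alpha> \<noteq> 0 \<Longrightarrow> reflect \<alpha> \<beta> \<bullet> \<alpha> = - (\<beta> \<bullet> \<alpha>)"
  by (simp add: reflect_def inner_diff_left)

lemma reflect_involutive: "\<alpha> \<noteq> 0 \<Longrightarrow> reflect \<alpha> (reflect \<alpha> \<beta>) = \<beta>"
  by (simp add: reflect_def inner_diff_left algebra_simps)

lemma multiplicity_reflect:
  assumes "multiplicity R m" and "\<alpha> \<in> R" and "\<beta> \<in> R"
  shows "m (reflect \<alpha> \<beta>) = m \<beta>"
proof -
  have "reflect \<alpha> \<circ> id \<in> weyl_group R"
    by (rule weyl_group.weyl_step[OF \<open>\<alpha> \<in> R\<close> weyl_group.weyl_id])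
  then show ?thesis using assms unfolding multiplicity_def by fastforce
qed

definition reflection_inversions :: "'a::euclidean_space set \<Rightarrow> 'a \<Rightarrow> 'a set" where
  "reflection_inversions Rp \<alpha> = {\<beta>\<in>Rp. reflect \<alpha> \<beta> \<notin> Rp}"

text \<open>Only the inversions of \<open>s\<^sub>\<alpha>\<close> contribute to \<open>\<langle>\<rho>,\<alpha>\<rangle>\<close>: the remaining positive
  roots are permuted by \<open>s\<^sub>\<alpha>\<close>, which preserves \<open>m\<close> and negates the pairing with \<open>\<alpha>\<close>.\<close>
lemma rho_inner_inversions:
  assumes rs: "root_system R" and ps: "positive_system R Rp" and mult: "multiplicity R m"
    and a: "\<alpha> \<in> Rp"
  shows "rho Rp m \<bullet> \<alpha> = (1/2) * (\<Sum>\<beta>\<in>reflection_inversions Rp \<alpha>. m \<beta> * (\<beta> \<bullet> \<alpha>))"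
proof -
  have RpR: "Rp \<subseteq> R" using ps unfolding positive_system_def by auto
  have "finite R" "0 \<notin> R" using rs unfolding root_system_def by auto
  then have fin: "finite Rp" and aR: "\<alpha> \<in> R" and a0: "\<alpha> \<noteq> 0"
    using RpR a finite_subset by auto
  define f where "f \<beta> = m \<beta> * (\<beta> \<bullet> \<alpha>)" for \<beta>
  define C where "C = {\<beta>\<in>Rp. reflect \<alpha> \<beta> \<in> Rp}"
  have "sum f C = sum (f \<circ> reflect \<alpha>) C"
    by (rule sum.reindex_bij_witness[of _ "reflect \<alpha>" "reflect \<alpha>"])
       (auto simp: C_def reflect_involutive[OF a0])
  also have "\<dots> = - sum f C"
    unfolding sum_negf[symmetric] using RpR
    by (intro sum.cong) (auto simp: f_def C_def multiplicity_reflect[OF mult aR]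
                                    reflect_inner_root[OF a0])
  finally have C0: "sum f C = 0" by simp
  have "sum f Rp = sum f C + sum f (reflection_inversions Rp \<alpha>)"
    using fin by (subst sum.union_disjoint[symmetric])
                 (auto simp: C_def reflection_inversions_def intro: sum.cong)
  then show ?thesis
    using C0 by (simp add: rho_def f_def inner_sum_left)
qed

text \<open>An inversion \<open>\<beta>\<close> of \<open>s\<^sub>\<alpha>\<close> makes an acute angle with \<open>\<alpha>\<close>: at the regular element
  \<open>H\<^sub>0\<close> defining \<open>Rp\<close>, \<open>s\<^sub>\<alpha>\<beta> = \<beta> - 2\<langle>\<beta>,\<alpha>\<rangle>/\<langle>\<alpha>,\<alpha>\<rangle> \<alpha>\<close> can only turn negative if
  \<open>\<langle>\<beta>,\<alpha>\<rangle> > 0\<close>.\<close>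
lemma reflection_inversion_inner_pos:
  assumes rs: "root_system R" and ps: "positive_system R Rp" and a: "\<alpha> \<in> Rp"
    and b: "\<beta> \<in> reflection_inversions Rp \<alpha>"
  shows "\<beta> \<bullet> \<alpha> > 0"
proof -
  obtain H0 where Rp: "Rp = {\<gamma>\<in>R. \<gamma> \<bullet> H0 > 0}"
    using ps unfolding positive_system_def by blast
  have aH: "\<alpha> \<bullet> H0 > 0" and bH: "\<beta> \<bullet> H0 > 0" and bR: "\<beta> \<in> R"
    using a b Rp by (auto simp: reflection_inversions_def)
  have "\<alpha> \<in> R" using a Rp by auto
  then have aa: "\<alpha> \<bullet> \<alpha> > 0" using rs unfolding root_system_def by auto
  have "reflect \<alpha> \<beta> \<in> R" using \<open>\<alpha> \<in> R\<close> rs bR unfolding root_system_def by auto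
  then have "reflect \<alpha> \<beta> \<bullet> H0 \<le> 0"
    using b Rp by (auto simp: reflection_inversions_def)
  moreover have "reflect \<alpha> \<beta> \<bullet> H0 = \<beta> \<bullet> H0 - (2 * (\<beta> \<bullet> \<alpha>) / (\<alpha> \<bullet> \<alpha>)) * (\<alpha> \<bullet> H0)"
    by (simp add: reflect_def inner_diff_left)
  ultimately have "0 < (2 * (\<beta> \<bullet> \<alpha>) / (\<alpha> \<bullet> \<alpha>)) * (\<alpha> \<bullet> H0)"
    using bH by linarith
  then show ?thesis
    using aH aa by (simp add: zero_less_mult_iff zero_less_divide_iff)
qed

lemma root_multiple_inversion:
  assumes ps: "positive_system R Rp" and a: "\<alpha> \<in> Rp" and c: "c > 0" and cR: "c *\<^sub>R \<alpha> \<in> R"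
  shows "c *\<^sub>R \<alpha> \<in> reflection_inversions Rp \<alpha>"
proof -
  obtain H0 where Rp: "Rp = {\<gamma>\<in>R. \<gamma> \<bullet> H0 > 0}"
    using ps unfolding positive_system_def by blast
  have aH: "\<alpha> \<bullet> H0 > 0" using a Rp by auto
  have "\<alpha> \<noteq> 0" using aH by auto
  then have "reflect \<alpha> (c *\<^sub>R \<alpha>) = c *\<^sub>R \<alpha> - (2 * c) *\<^sub>R \<alpha>"
    by (simp add: reflect_def)
  also have "\<dots> = (c - 2 * c) *\<^sub>R \<alpha>"
    by (rule scaleR_left_diff_distrib[symmetric])
  finally have "reflect \<alpha> (c *\<^sub>R \<alpha>) = - (c *\<^sub>R \<alpha>)"
    by simp
  moreover have pos: "(c *\<^sub>R \<alpha>) \<bullet> H0 > 0"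
    using c aH by simp
  ultimately have "reflect \<alpha> (c *\<^sub>R \<alpha>) \<notin> Rp"
    using Rp by auto
  moreover have "c *\<^sub>R \<alpha> \<in> Rp"
    using cR pos Rp by auto
  ultimately show ?thesis
    by (simp add: reflection_inversions_def)
qed

text \<open>The key estimate: \<open>\<langle>\<rho>,\<alpha>\<rangle> \<ge> (m\<^sub>\<alpha>/2 + m\<^sub>\<alpha>\<^sub>/\<^sub>2/4) \<langle>\<alpha>,\<alpha>\<rangle>\<close> for every positive root,
  obtained by dropping from the inversion sum all terms except those of \<open>\<alpha>\<close> and \<open>\<alpha>/2\<close>.\<close>
lemma rho_inner_lower_bound:
  assumes rs: "root_system R" and ps: "positive_system R Rp" and mult: "multiplicity R m"
    and a: "\<alpha> \<in> Rp"
  shows "rho Rp m \<bullet> \<alpha> \<ge> (m \<alpha> / 2 + m ((1/2) *\<^sub>R \<alpha>) / 4) * (\<alpha> \<bullet> \<alpha>)"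
proof -
  define f where "f \<beta> = m \<beta> * (\<beta> \<bullet> \<alpha>)" for \<beta>
  define B where "B = reflection_inversions Rp \<alpha>"
  have RpR: "Rp \<subseteq> R" using ps unfolding positive_system_def by auto
  have "finite Rp"
    using rs RpR finite_subset unfolding root_system_def by auto
  then have finB: "finite B"
    unfolding B_def reflection_inversions_def by simp
  have a0: "\<alpha> \<noteq> 0" using a RpR rs unfolding root_system_def by auto
  have f_nonneg: "f \<beta> \<ge> 0" if "\<beta> \<in> B" for \<beta>
  proof -
    have "\<beta> \<in> R" using that RpR by (auto simp: B_def reflection_inversions_def)
    then have "m \<beta> > 0" using mult unfolding multiplicity_def by auto
    moreover have "\<beta> \<bullet> \<alpha> > 0"
      using reflection_inversion_inner_pos[OF rs ps a] that by (simp add: B_def)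
    ultimately show ?thesis by (simp add: f_def)
  qed
  have aB: "\<alpha> \<in> B"
    using root_multiple_inversion[OF ps a, of 1] a RpR by (auto simp: B_def)
  have "f \<alpha> + f ((1/2) *\<^sub>R \<alpha>) \<le> sum f B"
  proof (cases "(1/2) *\<^sub>R \<alpha> \<in> R")
    case True
    have "(1/2) *\<^sub>R \<alpha> \<in> B"
      using root_multiple_inversion[OF ps a _ True] by (simp add: B_def)
    moreover have "(1/2) *\<^sub>R \<alpha> \<noteq> \<alpha>"
      using a0 scaleR_cancel_right[of "1/2" \<alpha> 1] by simp
    ultimately have "f \<alpha> + f ((1/2) *\<^sub>R \<alpha>) = sum f {\<alpha>, (1/2) *\<^sub>R \<alpha>}"
      and "{\<alpha>, (1/2) *\<^sub>R \<alpha>} \<subseteq> B" using aB by auto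
    then show ?thesis using sum_mono2[OF finB _ f_nonneg] by simp
  next
    case False
    then have "f ((1/2) *\<^sub>R \<alpha>) = 0" using mult unfolding multiplicity_def f_def by simp
    moreover have "sum f {\<alpha>} \<le> sum f B"
      by (rule sum_mono2[OF finB]) (use aB f_nonneg in auto)
    ultimately show ?thesis by simp
  qed
  moreover have "f \<alpha> + f ((1/2) *\<^sub>R \<alpha>) = (m \<alpha> + m ((1/2) *\<^sub>R \<alpha>) / 2) * (\<alpha> \<bullet> \<alpha>)"
    by (simp add: f_def algebra_simps)
  ultimately show ?thesis
    using rho_inner_inversions[OF rs ps mult a] by (simp add: f_def B_def algebra_simps)
qed

text \<open>By the estimate on \<open>\<langle>\<rho>,\<alpha>\<rangle>\<close>, both Gamma arguments in \<open>c\<^sup>*\<^sub>\<alpha>(-\<rho>)\<close> are at least 1.\<close>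
lemma ctilde_star_minus_rho_pos:
  assumes rs: "root_system R" and ps: "positive_system R Rp" and mult: "multiplicity R m"
  shows "ctilde_star Rp m (- rho Rp m) > 0"
  unfolding ctilde_star_def
proof (rule prod_pos)
  fix \<alpha> assume a: "\<alpha> \<in> Rp"
  have aR: "\<alpha> \<in> R" using a ps unfolding positive_system_def by auto
  then have aa: "\<alpha> \<bullet> \<alpha> > 0" using rs unfolding root_system_def by auto
  have m_nonneg: "m \<beta> \<ge> 0" for \<beta>
    using mult unfolding multiplicity_def by (cases "\<beta> \<in> R") (auto intro: less_imp_le)
  have "m \<alpha> / 2 + m ((1/2) *\<^sub>R \<alpha>) / 4 \<le> rho Rp m \<bullet> \<alpha> / (\<alpha> \<bullet> \<alpha>)"
    using rho_inner_lower_bound[OF rs ps mult a] aa by (simp add: le_divide_eq)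
  then have "coord (- rho Rp m) \<alpha> \<le> - (m \<alpha> / 2 + m ((1/2) *\<^sub>R \<alpha>) / 4)"
    by (simp add: coord_def)
  then show "cstar_alpha m (- rho Rp m) \<alpha> > 0"
    unfolding cstar_alpha_def
    using m_nonneg[of \<alpha>] m_nonneg[of "(1/2) *\<^sub>R \<alpha>"]
    by (intro divide_pos_pos Gamma_real_pos) linarith+
qed

theorem mainTheorem9:
  fixes R Rp :: "'a::euclidean_space set" and m :: "'a \<Rightarrow> real" and \<mu> :: 'a
  assumes "root_system R"
    and "positive_system R Rp"
    and "multiplicity R m"
    and "\<mu> \<in> dominant Rp"
    and opdam_norm_formula: "\<forall>\<nu>\<in>dominant Rp.
           norm_m_sq R Rp m (jacobi_P R Rp m \<nu>) =
           real (card (weyl_group R)) * ctilde_star Rp m (- \<nu> - rho Rp m) / ctilde Rp m (\<nu> + rho Rp m)"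
  shows "norm_m_sq R Rp m (HO_F R Rp m \<mu>) = I_delta R Rp m / d_fun Rp m \<mu>
       \<and> norm_m_sq R Rp m (HO_F R Rp m \<mu>) =
           I_delta R Rp m * cstar_fun Rp m (- \<mu> - rho Rp m) * c_fun Rp m (\<mu> + rho Rp m)"
proof -
  define W where "W = real (card (weyl_group R))"
  define a where "a = ctilde_star Rp m (- \<mu> - rho Rp m)"
  define b where "b = ctilde Rp m (\<mu> + rho Rp m)"
  define r where "r = ctilde Rp m (rho Rp m)"
  define s where "s = ctilde_star Rp m (- rho Rp m)"
  have s_nonzero: "s \<noteq> 0"
    using ctilde_star_minus_rho_pos[OF assms(1-3)] by (simp add: s_def)
  have "0 \<in> dominant Rp" by (simp add: dominant_def coord_def)
  then have I: "I_delta R Rp m = W * s / r"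
    using I_delta_opdam[OF opdam_norm_formula[rule_format]] by (simp add: W_def s_def r_def)
  have P: "norm_m_sq R Rp m (jacobi_P R Rp m \<mu>) = W * a / b"
    using opdam_norm_formula assms(4) by (simp add: W_def a_def b_def)
  have "HO_F R Rp m \<mu> = (\<lambda>H. of_real (b / r) * jacobi_P R Rp m \<mu> H)"
    by (intro ext) (simp only: HO_F_def c_fun_def b_def r_def)
  then have F: "norm_m_sq R Rp m (HO_F R Rp m \<mu>) = (b / r)\<^sup>2 * norm_m_sq R Rp m (jacobi_P R Rp m \<mu>)"
    by (simp only: norm_m_sq_scale norm_of_real power2_abs)
  have c: "c_fun Rp m (\<mu> + rho Rp m) = b / r" by (simp add: c_fun_def b_def r_def)
  have c_star: "cstar_fun Rp m (- \<mu> - rho Rp m) = a / s" by (simp add: cstar_fun_def a_def s_def)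
  have "(b / r)\<^sup>2 * (W * a / b) = W * s / r * (a / s) * (b / r)"
    using s_nonzero by (cases "b = 0") (simp_all add: field_simps power2_eq_square)
  then have "norm_m_sq R Rp m (HO_F R Rp m \<mu>) =
           I_delta R Rp m * cstar_fun Rp m (- \<mu> - rho Rp m) * c_fun Rp m (\<mu> + rho Rp m)"
    unfolding F P I c c_star .
  then show ?thesis by (simp add: d_fun_def)
qed

end
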